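(* Let $S$ be a finite set, $f:S\to\mathbb{R}$ a fitness function to be maximized, $S_{\mathrm{opt}}$ the set of maximizers of $f$ and $S_{\mathrm{non}}=S\setminus S_{\mathrm{opt}}$ (assumed nonempty). Let $s1,\dots,s\kappa$ be $\kappa$ mutation operators on $S$, and let $\mathbf{q}$ be any strategy probability distribution over them. Then the homogeneous mixed strategy (1+1) EA with strategy distribution $\mathbf{q}$ satisfies $$R(\mathbf{T}_{\mathbf{q}})\ \ge\ \min\{R(\mathbf{T}_{sk});\ k=1,\dots,\kappa\}\quad\text{and}\quad T(\mathbf{T}_{\mathbf{q}})\ \le\ \max\{T(\mathbf{T}_{sk});\ k=1,\dots,\kappa\},$$ i.e. its asymptotic convergence rate is not smaller, and its asymptotic hitting time not larger, than that of the worst pure strategy (1+1) EA using only one of these mutation operators.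
   Context: A mutation operator $s$ on the finite set $S$ is a stochastic matrix $\mathbf{P}_{m,s}=[P_{m,s}(x,y)]_{x,y\in S}$ (probability that mutating $x$ yields $y$). Strict elitist selection between parent $x$ and offspring $y$ keeps $y$ if $f(y)>f(x)$ and keeps $x$ otherwise. The pure strategy (1+1) EA EA($s$) repeatedly mutates the current individual by $s$ and applies strict elitist selection; it is a homogeneous Markov chain on $S$ with transition probabilities $P_s(x,y)=P_{m,s}(x,y)$ if $f(y)>f(x)$, $P_s(x,y)=0$ if $y\neq x$ and $f(y)\le f(x)$, and $P_s(x,x)=1-\sum_{y:\,f(y)>f(x)}P_{m,s}(x,y)$. A (state-dependent) strategy probability distribution is a map $x\mapsto \mathbf{q}(x)=(q_{s1}(x),\dots,q_{s\kappa}(x))$ with $q_{sk}(x)\in[0,1]$ and $\sum_k q_{sk}(x)=1$. The homogeneous mixed strategy (1+1) EA with distribution $\mathbf{q}$ at each generation, with current individual $x$, chooses operator $sk$ with probability $q_{sk}(x)$, mutates $x$ by it, and applies strict elitist selection; its transition matrix is $P_{\mathbf{q}}(x,y)=\sum_{k}q_{sk}(x)P_{sk}(x,y)$. For such an EA with transition matrix $\mathbf{P}$, let $\mathbf{T}$ denote the submatrix $[P(x,y)]_{x,y\in S_{\mathrm{non}}}$ and $\rho(\mathbf{T})$ its spectral radius. The asymptotic convergence rate is $R(\mathbf{T})=-\ln\rho(\mathbf{T})$ (with $-\ln 0=+\infty$). The asymptotic hitting time is $T(\mathbf{T})=\rho((\mathbf{I}-\mathbf{T})^{-1})$ if $\rho(\mathbf{T})<1$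 and $T(\mathbf{T})=+\infty$ if $\rho(\mathbf{T})=1$. Subscripts $\mathbf{q}$ and $sk$ indicate the matrices of the mixed strategy EA and of the pure strategy EA($sk$), respectively. *)

theory Defs
  imports "HOL-Analysis.Analysis" "Jordan_Normal_Form.Spectral_Radius"
          "Jordan_Normal_Form.Gauss_Jordan_Elimination"
begin

definition S_opt :: "'a set \<Rightarrow> ('a \<Rightarrow> real) \<Rightarrow> 'a set" where
  "S_opt S f = {x \<in> S. \<forall>y\<in>S. f y \<le> f x}"

definition S_non :: "'a set \<Rightarrow> ('a \<Rightarrow> real) \<Rightarrow> 'a set" where
  "S_non S f = S - S_opt S f"

text \<open>A mutation operator on S: a stochastic matrix indexed by S.\<close>
definition stochastic_on :: "'a set \<Rightarrow> ('a \<Rightarrow> 'a \<Rightarrow> real) \<Rightarrow> bool" where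
  "stochastic_on S Pm \<longleftrightarrow> (\<forall>x\<in>S. (\<forall>y\<in>S. 0 \<le> Pm x y) \<and> (\<Sum>y\<in>S. Pm x y) = 1)"

text \<open>Transition matrix of the pure strategy (1+1) EA with mutation Pm and strict elitist selection.\<close>
definition pure_trans :: "'a set \<Rightarrow> ('a \<Rightarrow> real) \<Rightarrow> ('a \<Rightarrow> 'a \<Rightarrow> real) \<Rightarrow> 'a \<Rightarrow> 'a \<Rightarrow> real" where
  "pure_trans S f Pm x y =
     (if f y > f x then Pm x y
      else if y = x then 1 - (\<Sum>z\<in>{z\<in>S. f z > f x}. Pm x z)
      else 0)"

definition strategy_distribution :: "'a set \<Rightarrow> nat \<Rightarrow> ('a \<Rightarrow> nat \<Rightarrow> real) \<Rightarrow> bool" where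
  "strategy_distribution S \<kappa> q \<longleftrightarrow>
     (\<forall>x\<in>S. (\<forall>k\<in>{1..\<kappa>}. 0 \<le> q x k \<and> q x k \<le> 1) \<and> (\<Sum>k=1..\<kappa>. q x k) = 1)"

definition mixed_trans :: "'a set \<Rightarrow> ('a \<Rightarrow> real) \<Rightarrow> nat \<Rightarrow> (nat \<Rightarrow> 'a \<Rightarrow> 'a \<Rightarrow> real)
    \<Rightarrow> ('a \<Rightarrow> nat \<Rightarrow> real) \<Rightarrow> 'a \<Rightarrow> 'a \<Rightarrow> real" where
  "mixed_trans S f \<kappa> Pm q x y = (\<Sum>k=1..\<kappa>. q x k * pure_trans S f (Pm k) x y)"

definition sub_mat :: "'a::linorder set \<Rightarrow> ('a \<Rightarrow> 'a \<Rightarrow> real) \<Rightarrow> complex mat" where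
  "sub_mat A P = (let xs = sorted_list_of_set A in
     mat (length xs) (length xs) (\<lambda>(i,j). complex_of_real (P (xs ! i) (xs ! j))))"

definition conv_rate :: "complex mat \<Rightarrow> ereal" where
  "conv_rate T = (if spectral_radius T = 0 then \<infinity> else ereal (- ln (spectral_radius T)))"

definition hit_time :: "complex mat \<Rightarrow> ereal" where
  "hit_time T = (if spectral_radius T < 1
      then ereal (spectral_radius (the (mat_inverse (1\<^sub>m (dim_row T) - T))))
      else \<infinity>)"

end

theory Submission
  imports Defs
begin

text \<open>With strict elitist selection the chain only leaves a state towards strictly fitter
  states, so the transition submatrix on the non-optimal states becomes upper triangular once
  the states are ordered by fitness. Its eigenvalues are therefore its diagonal entries, the
  probabilities of staying put, and both the spectral radius of T and that of (I - T)^-1 are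
  monotone functions of the largest of them. The staying probability of the mixed strategy at a
  state is a convex combination of those of the pure strategies, hence bounded by the largest
  staying probability of a single pure strategy.\<close>

text \<open>Upper triangular after ordering the indices by the weight g; ties in g leave no room
  for off-diagonal entries.\<close>
definition weight_triangular :: "(nat \<Rightarrow> real) \<Rightarrow> 'b::zero mat \<Rightarrow> bool" where
  "weight_triangular g A \<longleftrightarrow>
     (\<forall>i<dim_row A. \<forall>j<dim_col A. i \<noteq> j \<longrightarrow> g j \<le> g i \<longrightarrow> A $$ (i, j) = 0)"

lemma permutes_moves_to_lower_weight:
  fixes g :: "nat \<Rightarrow> real"
  assumes p: "p permutes {0..<n}" and "p \<noteq> id"
  obtains i where "i < n" "p i \<noteq> i" "g (p i) \<le> g i"
proof -
  define D where "D = {i. p i \<noteq> i}"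
  have D: "D \<subseteq> {0..<n}" "D \<noteq> {}"
    using assms unfolding D_def permutes_def by auto
  then have "finite D" using finite_subset by blast
  with D obtain i where iD: "i \<in> D" and max: "\<And>j. j \<in> D \<Longrightarrow> g j \<le> g i"
    using Max_in[of "g ` D"] Max_ge[of "g ` D"] by fastforce
  have "p (p i) \<noteq> p i"
    using iD permutes_inj[OF p] unfolding D_def by (auto dest: injD)
  then have "g (p i) \<le> g i" using max unfolding D_def by blast
  with iD D show thesis using that unfolding D_def by auto
qed

lemma det_weight_triangular:
  fixes A :: "'b::comm_ring_1 mat"
  assumes A: "A \<in> carrier_mat n n" and tri: "weight_triangular g A"
  shows "det A = (\<Prod>i=0..<n. A $$ (i, i))"
proof -
  let ?P = "{p. p permutes {0..<n}}"
  have vanish: "(\<Prod>i=0..<n. A $$ (i, p i)) = 0" if "p \<in> ?P - {id}" for p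
  proof -
    from that have p: "p permutes {0..<n}" "p \<noteq> id" by auto
    then obtain i where "i < n" "p i \<noteq> i" "g (p i) \<le> g i"
      by (rule permutes_moves_to_lower_weight)
    moreover have "p i < n" using p(1) \<open>i < n\<close> permutes_in_image by fastforce
    ultimately have "A $$ (i, p i) = 0" using A tri unfolding weight_triangular_def by auto
    with \<open>i < n\<close> show ?thesis by (intro prod_zero) auto
  qed
  have "det A = (\<Sum>p \<in> ?P. signof p * (\<Prod>i=0..<n. A $$ (i, p i)))"
    using det_def'[OF A] .
  also have "\<dots> = signof id * (\<Prod>i=0..<n. A $$ (i, id i))"
    using vanish
    by (subst sum.remove[of _ id]) (simp_all add: finite_permutations permutes_id)
  finally show ?thesis by (simp add: sign_id)
qed

lemma weight_triangular_char_matrix: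
  assumes "A \<in> carrier_mat n n" and "weight_triangular g A"
  shows "weight_triangular g (char_matrix A e)"
  using assms unfolding weight_triangular_def char_matrix_def by auto

lemma spectrum_weight_triangular:
  fixes A :: "'b::field mat"
  assumes A: "A \<in> carrier_mat n n" and tri: "weight_triangular g A"
  shows "spectrum A = (\<lambda>i. A $$ (i, i)) ` {..<n}"
proof -
  have "det (char_matrix A e) = (\<Prod>i=0..<n. char_matrix A e $$ (i, i))" for e
    using A by (intro det_weight_triangular[OF _ weight_triangular_char_matrix[OF A tri]]) simp
  also have "\<dots> e = (\<Prod>i=0..<n. A $$ (i, i) - e)" for e
    using A by (intro prod.cong) (auto simp: char_matrix_def)
  finally show ?thesis
    unfolding spectrum_def eigenvalue_det[OF A] by (auto simp: prod_zero_iff)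
qed

lemma eigenvalue_right_inverse:
  fixes M B :: "'b::field mat"
  assumes M: "M \<in> carrier_mat n n" and B: "B \<in> carrier_mat n n"
    and MB: "M * B = 1\<^sub>m n" and l: "eigenvalue B l"
  shows "eigenvalue M (inverse l)"
proof -
  obtain v where v: "v \<in> carrier_vec n" "v \<noteq> 0\<^sub>v n" "B *\<^sub>v v = l \<cdot>\<^sub>v v"
    using l B unfolding eigenvalue_def eigenvector_def by auto
  have "v = (M * B) *\<^sub>v v" using MB v by simp
  also have "\<dots> = l \<cdot>\<^sub>v (M *\<^sub>v v)"
    using M B v by (simp add: assoc_mult_mat_vec mult_mat_vec)
  finally have v_eq: "v = l \<cdot>\<^sub>v (M *\<^sub>v v)" .
  have "l \<noteq> 0"
  proof
    assume "l = 0"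
    have "v $ i = 0" if "i < n" for i
    proof -
      have "v $ i = (l \<cdot>\<^sub>v (M *\<^sub>v v)) $ i" using v_eq by simp
      with \<open>l = 0\<close> M that show ?thesis by simp
    qed
    with v have "v = 0\<^sub>v n" by (intro eq_vecI) auto
    with v show False by simp
  qed
  then have "M *\<^sub>v v = inverse l \<cdot>\<^sub>v v"
    by (subst v_eq) (simp add: smult_smult_assoc)
  then show ?thesis unfolding eigenvalue_def eigenvector_def using v M by auto
qed

lemma spectrum_inverse_mat:
  fixes M B :: "'b::field mat"
  assumes M: "M \<in> carrier_mat n n" and B: "B \<in> carrier_mat n n"
    and MB: "M * B = 1\<^sub>m n" and BM: "B * M = 1\<^sub>m n"
  shows "spectrum B = inverse ` spectrum M"
proof (intro equalityI subsetI)
  fix l assume "l \<in> spectrum B"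
  then have "inverse l \<in> spectrum M"
    using eigenvalue_right_inverse[OF M B MB] unfolding spectrum_def by auto
  then show "l \<in> inverse ` spectrum M" by (metis image_eqI inverse_inverse_eq)
next
  fix l assume "l \<in> inverse ` spectrum M"
  then show "l \<in> spectrum B"
    using eigenvalue_right_inverse[OF B M BM] unfolding spectrum_def by auto
qed

lemma spectral_radius_weight_triangular:
  assumes A: "A \<in> carrier_mat n n" and tri: "weight_triangular g A"
    and diag: "\<And>i. i < n \<Longrightarrow> A $$ (i, i) = complex_of_real (d i)"
    and nonneg: "\<And>i. i < n \<Longrightarrow> 0 \<le> d i"
  shows "spectral_radius A = Max (d ` {..<n})"
proof -
  have "norm ` spectrum A = d ` {..<n}"
    unfolding spectrum_weight_triangular[OF A tri] image_image
    using diag nonneg by (intro image_cong) auto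
  then show ?thesis unfolding spectral_radius_def by simp
qed

lemma spectral_radius_inverse_one_minus_weight_triangular:
  assumes A: "A \<in> carrier_mat n n" and tri: "weight_triangular g A" and "n > 0"
    and diag: "\<And>i. i < n \<Longrightarrow> A $$ (i, i) = complex_of_real (d i)"
    and lt1: "Max (d ` {..<n}) < 1"
  shows "spectral_radius (the (mat_inverse (1\<^sub>m n - A))) = 1 / (1 - Max (d ` {..<n}))"
proof -
  define M where "M = 1\<^sub>m n - A"
  have M: "M \<in> carrier_mat n n" unfolding M_def using A by auto
  have triM: "weight_triangular g M"
    using A tri unfolding M_def weight_triangular_def by auto
  have d_lt1: "d i < 1" if "i < n" for i
  proof -
    have "d i \<le> Max (d ` {..<n})" using that by (intro Max_ge) auto
    with lt1 show ?thesis by linarith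
  qed
  have diagM: "M $$ (i, i) = complex_of_real (1 - d i)" if "i < n" for i
    using that A diag unfolding M_def by simp
  have normM: "norm (M $$ (i, i)) = 1 - d i" if "i < n" for i
    using d_lt1[OF that] by (simp only: diagM[OF that] norm_of_real)
  have "det M \<noteq> 0"
    unfolding det_weight_triangular[OF M triM] using diagM d_lt1
    by (auto simp: prod_zero_iff) (metis less_irrefl)
  then have "M \<in> Units (ring_mat TYPE(complex) n ())" by (rule det_non_zero_imp_unit[OF M])
  then obtain B where inv: "mat_inverse M = Some B"
    using mat_inverse(1)[OF M, of "()"] by (cases "mat_inverse M") auto
  with mat_inverse(2)[OF M]
  have B: "B \<in> carrier_mat n n" and MB: "M * B = 1\<^sub>m n" and BM: "B * M = 1\<^sub>m n"
    by auto
  have "norm ` spectrum B = (\<lambda>t. 1 / (1 - t)) ` d ` {..<n}"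
    unfolding spectrum_inverse_mat[OF M B MB BM] spectrum_weight_triangular[OF M triM] image_image
    by (intro image_cong) (simp_all add: norm_inverse normM divide_inverse)
  also have "Max \<dots> = 1 / (1 - Max (d ` {..<n}))"
  proof (rule Max_eqI)
    show "1 / (1 - Max (d ` {..<n})) \<in> (\<lambda>t. 1 / (1 - t)) ` d ` {..<n}"
      using \<open>n > 0\<close> by (intro imageI Max_in) auto
    show "y \<le> 1 / (1 - Max (d ` {..<n}))" if "y \<in> (\<lambda>t. 1 / (1 - t)) ` d ` {..<n}" for y
      using that lt1 by (auto intro!: frac_le)
  qed simp
  finally show ?thesis unfolding spectral_radius_def M_def[symmetric] inv by simp
qed

definition elitist_on :: "'a set \<Rightarrow> ('a \<Rightarrow> real) \<Rightarrow> ('a \<Rightarrow> 'a \<Rightarrow> real) \<Rightarrow> bool" where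
  "elitist_on X f P \<longleftrightarrow> (\<forall>x\<in>X. \<forall>y\<in>X. x \<noteq> y \<longrightarrow> f y \<le> f x \<longrightarrow> P x y = 0)"

definition max_stay :: "'a set \<Rightarrow> ('a \<Rightarrow> 'a \<Rightarrow> real) \<Rightarrow> real" where
  "max_stay X P = Max ((\<lambda>x. P x x) ` X)"

lemma max_stay_nonneg:
  assumes "finite X" and "X \<noteq> {}" and "\<And>x. x \<in> X \<Longrightarrow> 0 \<le> P x x"
  shows "0 \<le> max_stay X P"
proof -
  obtain x where x: "x \<in> X" using assms(2) by blast
  have "P x x \<le> max_stay X P" unfolding max_stay_def using assms(1) x by simp
  with assms(3)[OF x] show ?thesis by linarith
qed

lemma sub_mat_carrier: "finite X \<Longrightarrow> sub_mat X P \<in> carrier_mat (card X) (card X)"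
  unfolding sub_mat_def Let_def by simp

lemma sub_mat_diag:
  "finite X \<Longrightarrow> i < card X \<Longrightarrow>
    sub_mat X P $$ (i, i) = complex_of_real (P (sorted_list_of_set X ! i) (sorted_list_of_set X ! i))"
  unfolding sub_mat_def Let_def by simp

lemma sub_mat_diag_image:
  "finite X \<Longrightarrow>
    (\<lambda>i. P (sorted_list_of_set X ! i) (sorted_list_of_set X ! i)) ` {..<card X} = (\<lambda>x. P x x) ` X"
proof -
  assume "finite X"
  then have "(!) (sorted_list_of_set X) ` {..<card X} = X"
    using nth_image[of "card X" "sorted_list_of_set X"] by (simp add: atLeast0LessThan)
  then show ?thesis
    using image_image[of "\<lambda>x. P x x" "(!) (sorted_list_of_set X)" "{..<card X}"] by simp
qed

lemma weight_triangular_sub_mat: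
  assumes "finite X" and "elitist_on X f P"
  shows "weight_triangular (\<lambda>i. f (sorted_list_of_set X ! i)) (sub_mat X P)"
proof -
  let ?xs = "sorted_list_of_set X"
  have "?xs ! i \<noteq> ?xs ! j" "?xs ! i \<in> X" "?xs ! j \<in> X"
    if "i < card X" "j < card X" "i \<noteq> j" for i j
    using that assms(1) nth_eq_iff_index_eq[of ?xs i j] nth_mem[of i ?xs] nth_mem[of j ?xs] by auto
  then show ?thesis
    using assms unfolding weight_triangular_def elitist_on_def sub_mat_def Let_def by auto
qed

lemma spectral_radius_sub_mat_elitist:
  assumes X: "finite X" and el: "elitist_on X f P" and nonneg: "\<And>x. x \<in> X \<Longrightarrow> 0 \<le> P x x"
  shows "spectral_radius (sub_mat X P) = max_stay X P"
proof -
  let ?xs = "sorted_list_of_set X"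
  have "0 \<le> P (?xs ! i) (?xs ! i)" if "i < card X" for i
    using nonneg nth_mem[of i ?xs] that X by simp
  then show ?thesis
    using spectral_radius_weight_triangular[OF sub_mat_carrier[OF X] weight_triangular_sub_mat[OF X el]]
    unfolding max_stay_def sub_mat_diag_image[OF X, symmetric] by (simp add: sub_mat_diag[OF X])
qed

lemma hit_time_sub_mat_elitist:
  assumes X: "finite X" "X \<noteq> {}" and el: "elitist_on X f P"
    and nonneg: "\<And>x. x \<in> X \<Longrightarrow> 0 \<le> P x x"
  shows "hit_time (sub_mat X P) =
    (if max_stay X P < 1 then ereal (1 / (1 - max_stay X P)) else \<infinity>)"
proof -
  have "max_stay X P < 1 \<Longrightarrow>
      spectral_radius (the (mat_inverse (1\<^sub>m (card X) - sub_mat X P))) = 1 / (1 - max_stay X P)"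
    using X spectral_radius_inverse_one_minus_weight_triangular[OF sub_mat_carrier[OF X(1)]
        weight_triangular_sub_mat[OF X(1) el]]
    unfolding max_stay_def sub_mat_diag_image[OF X(1), symmetric]
    by (simp add: sub_mat_diag[OF X(1)] card_gt_0_iff)
  then show ?thesis
    using carrier_matD[OF sub_mat_carrier[OF X(1)]]
    unfolding hit_time_def by (simp add: spectral_radius_sub_mat_elitist[OF X(1) el nonneg])
qed

lemma conv_rate_antimono:
  assumes "0 \<le> spectral_radius A" and "spectral_radius A \<le> spectral_radius B"
  shows "conv_rate B \<le> conv_rate A"
  using assms unfolding conv_rate_def by auto

lemma elitist_on_pure_trans: "elitist_on X f (pure_trans S f Pm)"
  unfolding elitist_on_def pure_trans_def by auto

lemma pure_trans_stay_nonneg: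
  assumes "finite S" and "stochastic_on S Pm" and "x \<in> S"
  shows "0 \<le> pure_trans S f Pm x x"
proof -
  have "(\<Sum>z\<in>{z\<in>S. f z > f x}. Pm x z) \<le> (\<Sum>z\<in>S. Pm x z)"
    using assms by (intro sum_mono2) (auto simp: stochastic_on_def)
  then show ?thesis using assms unfolding pure_trans_def stochastic_on_def by auto
qed

lemma elitist_on_mixed_trans: "elitist_on X f (mixed_trans S f \<kappa> Pm q)"
  unfolding elitist_on_def mixed_trans_def pure_trans_def by auto

lemma mixed_trans_stay_nonneg:
  assumes "finite S" and "\<forall>k\<in>{1..\<kappa>}. stochastic_on S (Pm k)"
    and "strategy_distribution S \<kappa> q" and "x \<in> S"
  shows "0 \<le> mixed_trans S f \<kappa> Pm q x x"
  using assms unfolding mixed_trans_def strategy_distribution_def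
  by (intro sum_nonneg mult_nonneg_nonneg) (auto intro: pure_trans_stay_nonneg)

lemma max_stay_mixed_trans_le:
  assumes X: "finite X" "X \<noteq> {}" "X \<subseteq> S" and "\<kappa> \<ge> 1"
    and q: "strategy_distribution S \<kappa> q"
  obtains k where "k \<in> {1..\<kappa>}"
    and "max_stay X (mixed_trans S f \<kappa> Pm q) \<le> max_stay X (pure_trans S f (Pm k))"
proof -
  let ?r = "\<lambda>k. max_stay X (pure_trans S f (Pm k))"
  obtain k0 where k0: "k0 \<in> {1..\<kappa>}" and max: "\<And>k. k \<in> {1..\<kappa>} \<Longrightarrow> ?r k \<le> ?r k0"
    using Max_in[of "?r ` {1..\<kappa>}"] Max_ge[of "?r ` {1..\<kappa>}"] \<open>\<kappa> \<ge> 1\<close> by fastforce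
  have "mixed_trans S f \<kappa> Pm q x x \<le> ?r k0" if x: "x \<in> X" for x
  proof -
    have q_x: "\<forall>k\<in>{1..\<kappa>}. 0 \<le> q x k" "(\<Sum>k=1..\<kappa>. q x k) = 1"
      using q x X(3) unfolding strategy_distribution_def by auto
    have "pure_trans S f (Pm k) x x \<le> ?r k0" if "k \<in> {1..\<kappa>}" for k
      using max[OF that] x X(1) unfolding max_stay_def by (meson Max_ge finite_imageI image_eqI order_trans)
    then have "mixed_trans S f \<kappa> Pm q x x \<le> (\<Sum>k=1..\<kappa>. q x k * ?r k0)"
      using q_x unfolding mixed_trans_def by (intro sum_mono mult_left_mono) auto
    also have "\<dots> = ?r k0"
      using q_x by (simp flip: sum_distrib_right)
    finally show ?thesis .
  qed
  then have "max_stay X (mixed_trans S f \<kappa> Pm q) \<le> ?r k0"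
    using X unfolding max_stay_def by (intro Max.boundedI) auto
  with k0 show thesis by (rule that)
qed

theorem theorem2:
  fixes S :: "'a::linorder set" and f :: "'a \<Rightarrow> real" and \<kappa> :: nat
    and Pm :: "nat \<Rightarrow> 'a \<Rightarrow> 'a \<Rightarrow> real" and q :: "'a \<Rightarrow> nat \<Rightarrow> real"
  assumes "finite S"
    and "S_non S f \<noteq> {}"
    and "\<kappa> \<ge> 1"
    and "\<forall>k\<in>{1..\<kappa>}. stochastic_on S (Pm k)"
    and "strategy_distribution S \<kappa> q"
  shows "conv_rate (sub_mat (S_non S f) (mixed_trans S f \<kappa> Pm q))
           \<ge> Min ((\<lambda>k. conv_rate (sub_mat (S_non S f) (pure_trans S f (Pm k)))) ` {1..\<kappa>})
       \<and> hit_time (sub_mat (S_non S f) (mixed_trans S f \<kappa> Pm q))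
           \<le> Max ((\<lambda>k. hit_time (sub_mat (S_non S f) (pure_trans S f (Pm k)))) ` {1..\<kappa>})"
proof -
  define X where "X = S_non S f"
  let ?Q = "mixed_trans S f \<kappa> Pm q" and ?P = "\<lambda>k. pure_trans S f (Pm k)"
  have X: "finite X" "X \<noteq> {}" "X \<subseteq> S"
    using assms(1,2) finite_subset unfolding X_def S_non_def by auto
  obtain k where k: "k \<in> {1..\<kappa>}" and le: "max_stay X ?Q \<le> max_stay X (?P k)"
    using max_stay_mixed_trans_le[OF X assms(3,5)] .
  have Q_stay: "0 \<le> ?Q x x" and P_stay: "0 \<le> ?P k x x" if "x \<in> X" for x
    using that X(3) k assms(4) mixed_trans_stay_nonneg[OF assms(1,4,5)]
      pure_trans_stay_nonneg[OF assms(1)] by auto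
  note rho_Q = spectral_radius_sub_mat_elitist[OF X(1) elitist_on_mixed_trans Q_stay]
   and rho_P = spectral_radius_sub_mat_elitist[OF X(1) elitist_on_pure_trans P_stay]
  have "conv_rate (sub_mat X (?P k)) \<le> conv_rate (sub_mat X ?Q)"
    using le max_stay_nonneg[of X ?Q, OF X(1,2) Q_stay]
    by (intro conv_rate_antimono) (simp_all add: rho_Q rho_P)
  then have "Min ((\<lambda>k. conv_rate (sub_mat X (?P k))) ` {1..\<kappa>}) \<le> conv_rate (sub_mat X ?Q)"
    using k by (intro order_trans[OF Min_le]) auto
  moreover have "hit_time (sub_mat X ?Q) \<le> Max ((\<lambda>k. hit_time (sub_mat X (?P k))) ` {1..\<kappa>})"
  proof -
    have "hit_time (sub_mat X ?Q) \<le> hit_time (sub_mat X (?P k))"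
      using le hit_time_sub_mat_elitist[OF X(1,2) elitist_on_mixed_trans Q_stay]
        hit_time_sub_mat_elitist[OF X(1,2) elitist_on_pure_trans P_stay]
      by (auto simp: frac_le)
    then show ?thesis using k by (intro order_trans[OF _ Max_ge]) auto
  qed
  ultimately show ?thesis unfolding X_def by simp
qed

end
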